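(* Let $A\in\mathbb{R}^{M\times M}$ be symmetric with eigenvalues $\lambda_1,\ldots,\lambda_M\in\mathbb{R}$, let $k_n,k_p,k_u>0$, and define the symmetric matrix $$Q=\begin{pmatrix}\frac{k_p}{k_n}A&0&\frac{I_M}{2k_n}\\0&\frac{k_p}{k_n}A&\frac{k_u}{2k_n}A\\\frac{I_M}{2k_n}&\frac{k_u}{2k_n}A&k_uA\end{pmatrix}.$$ Then: (1) the $3M$ eigenvalues of $Q$ are, for $i=1,\ldots,M$, $$\mu_1(\lambda_i)=\frac{k_p}{k_n}\lambda_i,\quad \mu_2(\lambda_i)=\frac{\lambda_ik_1-\sqrt{1+\lambda_i^2k_2}}{2k_n},\quad \mu_3(\lambda_i)=\frac{\lambda_ik_1+\sqrt{1+\lambda_i^2k_2}}{2k_n},$$ with $k_1=k_p+k_nk_u>0$ and $k_2=k_u^2+(k_p-k_nk_u)^2>0$; (2) if $\lambda_1\le\lambda_2\le\cdots\le\lambda_M<0$ and $k_n$ is such that $\lambda_M^2(4k_nk_pk_u-k_u^2)>1$, then $\mu_j(\lambda_i)<0$ for all $j=1,2,3$ and $i=1,\ldots,M$, and $\mu_3(\lambda_M)=\max_{j\in\{1,2,3\},\,i\in\{1,\ldots,M\}}\mu_j(\lambda_i)$. *)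

theory Defs
  imports "Jordan_Normal_Form.Char_Poly"
begin

definition Q_block :: "real \<Rightarrow> real \<Rightarrow> real \<Rightarrow> nat \<Rightarrow> real mat \<Rightarrow> nat \<Rightarrow> nat \<Rightarrow> real mat" where
  "Q_block kn kp ku M A r s =
     (if r = 0 \<and> s = 0 then (kp / kn) \<cdot>\<^sub>m A
      else if r = 1 \<and> s = 1 then (kp / kn) \<cdot>\<^sub>m A
      else if r = 2 \<and> s = 2 then ku \<cdot>\<^sub>m A
      else if (r = 0 \<and> s = 2) \<or> (r = 2 \<and> s = 0) then (1 / (2 * kn)) \<cdot>\<^sub>m 1\<^sub>m M
      else if (r = 1 \<and> s = 2) \<or> (r = 2 \<and> s = 1) then (ku / (2 * kn)) \<cdot>\<^sub>m A
      else 0\<^sub>m M M)"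

definition Q_mat :: "real \<Rightarrow> real \<Rightarrow> real \<Rightarrow> nat \<Rightarrow> real mat \<Rightarrow> real mat" where
  "Q_mat kn kp ku M A =
     mat (3 * M) (3 * M) (\<lambda>(i, j). Q_block kn kp ku M A (i div M) (j div M) $$ (i mod M, j mod M))"

definition k1 :: "real \<Rightarrow> real \<Rightarrow> real \<Rightarrow> real" where
  "k1 kn kp ku = kp + kn * ku"

definition k2 :: "real \<Rightarrow> real \<Rightarrow> real \<Rightarrow> real" where
  "k2 kn kp ku = ku\<^sup>2 + (kp - kn * ku)\<^sup>2"

definition mu :: "real \<Rightarrow> real \<Rightarrow> real \<Rightarrow> nat \<Rightarrow> real \<Rightarrow> real" where
  "mu kn kp ku j l =
     (if j = 1 then (kp / kn) * l
      else if j = 2 then (l * k1 kn kp ku - sqrt (1 + l\<^sup>2 * k2 kn kp ku)) / (2 * kn)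
      else (l * k1 kn kp ku + sqrt (1 + l\<^sup>2 * k2 kn kp ku)) / (2 * kn))"

end

theory Submission
  imports Defs "Jordan_Normal_Form.Schur_Decomposition"
begin

text \<open>By Schur's theorem A = P T P\<inverse> with T upper triangular and diagonal \<lambda>_1, ..., \<lambda>_M,
  and then Q(A) is conjugate to Q(T) by the block diagonal matrix diag(P, P, P). Ordering the
  indices of Q(T) by their position inside a block rather than by block turns Q(T) into an
  M \<times> M grid of 3 \<times> 3 blocks that is block upper triangular, whose i-th diagonal block is Q of the
  1 \<times> 1 matrix (\<lambda>_i). Hence the characteristic polynomial of Q(A) is the product of those of the
  3 \<times> 3 matrices Q(\<lambda>_i), with roots \<mu>_1(\<lambda>_i) and the two roots \<mu>_2(\<lambda>_i), \<mu>_3(\<lambda>_i) of a quadratic.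

  For the second part, \<mu>_1, \<mu>_2 \<le> \<mu>_3 pointwise, and \<mu>_3 is nondecreasing: z \<mapsto> sqrt (1 + z^2 k_2) is
  sqrt k_2-Lipschitz and k_1^2 - k_2 = 4 k_n k_p k_u - k_u^2 > 0. So everything is bounded by \<mu>_3(\<lambda>_M),
  which is negative by the hypothesis on \<lambda>_M.\<close>

lemma det_mat2: "det (mat 2 2 f) = (f (0,0) * f (1,1) - f (0,1) * f (1,0) :: 'a :: comm_ring_1)"
  by (simp add: laplace_expansion_row[of _ 2 0] laplace_expansion_row[of _ 1 0]
      cofactor_def mat_delete_def numeral_2_eq_2)

lemma det_mat3:
  "det (mat 3 3 f) = (f (0,0) * (f (1,1) * f (2,2) - f (1,2) * f (2,1))
     - f (0,1) * (f (1,0) * f (2,2) - f (1,2) * f (2,0))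
     + f (0,2) * (f (1,0) * f (2,1) - f (1,1) * f (2,0)) :: 'a :: comm_ring_1)"
  apply (subst laplace_expansion_row[of _ 3 0], simp, simp)
  apply (simp add: cofactor_def mat_delete_def numeral_3_eq_3 lessThan_Suc
      det_mat2[unfolded numeral_2_eq_2])
  apply (simp add: numeral_2_eq_2 algebra_simps)
  done

lemma det_permute_rows_cols:
  assumes A: "A \<in> carrier_mat n n" and p: "p permutes {0..<n}"
  shows "det (mat n n (\<lambda>(i,j). A $$ (p i, p j))) = det A"
proof -
  define B where "B = mat n n (\<lambda>(i,j). A $$ (p i, j))"
  define C where "C = mat n n (\<lambda>(i,j). transpose_mat B $$ (p i, j))"
  have B: "B \<in> carrier_mat n n" and C: "C \<in> carrier_mat n n" by (simp_all add: B_def C_def)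
  have "mat n n (\<lambda>(i,j). A $$ (p i, p j)) = transpose_mat C"
    using p by (intro eq_matI) (auto simp: B_def C_def permutes_in_image)
  then have "det (mat n n (\<lambda>(i,j). A $$ (p i, p j))) = det C"
    using det_transpose[OF C] by simp
  also have "\<dots> = signof p * det B"
    using det_permute_rows[of "transpose_mat B" n p] p B by (simp add: C_def det_transpose)
  also have "\<dots> = signof p * (signof p * det A)"
    using det_permute_rows[OF A p] by (simp add: B_def)
  also have "\<dots> = det A"
    by (simp add: mult.assoc[symmetric] of_int_mult[symmetric] del: of_int_mult)
  finally show ?thesis .
qed

section \<open>Block matrices\<close>

definition block_grid :: "nat \<Rightarrow> nat \<Rightarrow> (nat \<Rightarrow> nat \<Rightarrow> nat \<Rightarrow> nat \<Rightarrow> 'a) \<Rightarrow> 'a mat" where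
  "block_grid k n g = mat (n * k) (n * k) (\<lambda>(i,j). g (i div k) (j div k) (i mod k) (j mod k))"

lemma block_grid_carrier [simp]: "block_grid k n g \<in> carrier_mat (n * k) (n * k)"
  by (simp add: block_grid_def)

lemma block_grid_Suc:
  "block_grid k (Suc n) g = four_block_mat
     (mat k k (\<lambda>(r,s). g 0 0 r s))
     (mat k (n * k) (\<lambda>(r,j). g 0 (Suc (j div k)) r (j mod k)))
     (mat (n * k) k (\<lambda>(i,s). g (Suc (i div k)) 0 (i mod k) s))
     (block_grid k n (\<lambda>a b. g (Suc a) (Suc b)))"
proof -
  have "(i - k) mod k = i mod k \<and> Suc ((i - k) div k) = i div k" if "k \<le> i" "i < Suc n * k" for i
    using that by (cases k) (simp_all add: le_div_geq le_mod_geq)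
  then show ?thesis
    by (intro eq_matI) (auto simp: block_grid_def four_block_mat_def less_mult_imp_div_less)
qed

lemma det_block_grid_upper_triangular:
  fixes g :: "nat \<Rightarrow> nat \<Rightarrow> nat \<Rightarrow> nat \<Rightarrow> 'a :: idom"
  assumes "\<And>a b r s. b < a \<Longrightarrow> a < n \<Longrightarrow> g a b r s = 0"
  shows "det (block_grid k n g) = (\<Prod>a<n. det (mat k k (\<lambda>(r,s). g a a r s)))"
  using assms
proof (induction n arbitrary: g)
  case 0
  then show ?case by (simp add: block_grid_def)
next
  case (Suc n)
  have "mat (n * k) k (\<lambda>(i,s). g (Suc (i div k)) 0 (i mod k) s) = 0\<^sub>m (n * k) k"
    by (rule eq_matI) (auto intro!: Suc.prems simp: less_mult_imp_div_less)
  then have "det (block_grid k (Suc n) g)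
      = det (mat k k (\<lambda>(r,s). g 0 0 r s)) * det (block_grid k n (\<lambda>a b. g (Suc a) (Suc b)))"
    unfolding block_grid_Suc
    by (intro det_four_block_mat_lower_left_zero[of _ k _ "n * k"]) auto
  also have "det (block_grid k n (\<lambda>a b. g (Suc a) (Suc b)))
      = (\<Prod>a<n. det (mat k k (\<lambda>(r,s). g (Suc a) (Suc a) r s)))"
    using Suc.prems by (intro Suc.IH) auto
  finally show ?case by (simp add: prod.lessThan_Suc_shift del: prod.lessThan_Suc)
qed

lemma det_block_grid_swap:
  "det (block_grid k n g) = det (block_grid n k (\<lambda>r s a b. g a b r s))"
proof -
  define p where "p i = (if i < n * k then (i mod n) * k + i div n else i)" for i
  have div_n: "i div n < k" and div_k: "i div k < n" if "i < n * k" for i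
    using that by (simp_all add: less_mult_imp_div_less mult.commute[of n])
  have p_lt: "p i < n * k" if "i < n * k" for i
  proof -
    have "(i mod n) * k + i div n < Suc (i mod n) * k"
      using div_n[OF that] by simp
    also have "\<dots> \<le> n * k"
      using that by (intro mult_le_mono1) (cases n; simp add: Suc_leI)
    finally show ?thesis using that by (simp add: p_def)
  qed
  have p_div: "p i div k = i mod n" and p_mod: "p i mod k = i div n" if "i < n * k" for i
    using that div_n[OF that] by (simp_all add: p_def)
  have "inj_on p {0..<n * k}"
  proof (rule inj_onI)
    fix i j assume "i \<in> {0..<n * k}" "j \<in> {0..<n * k}" "p i = p j"
    then show "i = j" using p_div p_mod by (metis atLeastLessThan_iff div_mult_mod_eq)
  qed
  moreover have "p ` {0..<n * k} \<subseteq> {0..<n * k}" using p_lt by auto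
  ultimately have "bij_betw p {0..<n * k} {0..<n * k}"
    by (simp add: bij_betw_def endo_inj_surj)
  then have "p permutes {0..<n * k}"
    by (rule bij_imp_permutes) (simp add: p_def)
  moreover have "block_grid k n g $$ (p i, p j) = g (i mod n) (j mod n) (i div n) (j div n)"
    if "i < n * k" "j < n * k" for i j
    using that p_lt by (simp add: block_grid_def p_div p_mod)
  then have "block_grid n k (\<lambda>r s a b. g a b r s)
      = mat (n * k) (n * k) (\<lambda>(i,j). block_grid k n g $$ (p i, p j))"
    by (intro eq_matI) (auto simp: block_grid_def mult.commute[of k n])
  ultimately show ?thesis
    using det_permute_rows_cols[OF block_grid_carrier] by metis
qed

definition block_mat3 :: "nat \<Rightarrow> (nat \<Rightarrow> nat \<Rightarrow> 'a mat) \<Rightarrow> 'a mat" where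
  "block_mat3 M F = block_grid M 3 (\<lambda>r s a b. F r s $$ (a,b))"

definition block_diag3 :: "nat \<Rightarrow> 'a :: zero mat \<Rightarrow> 'a mat" where
  "block_diag3 M P = block_mat3 M (\<lambda>r s. if r = s then P else 0\<^sub>m M M)"

lemma block_mat3_carrier [simp]: "block_mat3 M F \<in> carrier_mat (3 * M) (3 * M)"
  by (simp add: block_mat3_def)

lemma block_diag3_carrier [simp]: "block_diag3 M P \<in> carrier_mat (3 * M) (3 * M)"
  by (simp add: block_diag3_def)

lemma dim_block_mat3 [simp]:
  "dim_row (block_mat3 M F) = 3 * M" "dim_col (block_mat3 M F) = 3 * M"
  by (simp_all add: block_mat3_def block_grid_def)

lemma block_mat3_cong:
  assumes "\<And>r s. r < 3 \<Longrightarrow> s < 3 \<Longrightarrow> F r s = G r s"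
  shows "block_mat3 M F = block_mat3 M G"
proof -
  have "i div M < 3" if "i < 3 * M" for i
    using that by (simp add: less_mult_imp_div_less)
  then show ?thesis
    by (intro eq_matI) (auto simp: block_mat3_def block_grid_def assms)
qed

lemma sum_div_mod_blocks:
  fixes f :: "nat \<Rightarrow> nat \<Rightarrow> 'a :: comm_monoid_add"
  assumes "M > 0"
  shows "(\<Sum>k = 0..<n * M. f (k div M) (k mod M)) = (\<Sum>t<n. \<Sum>l = 0..<M. f t l)"
proof -
  have "(\<Sum>k = 0..<n * M. f (k div M) (k mod M)) = (\<Sum>t<n. \<Sum>k = t * M..<t * M + M. f (k div M) (k mod M))"
    using sum.nat_group[of "\<lambda>k. f (k div M) (k mod M)" M n] by (simp add: atLeast0LessThan)
  also have "\<dots> = (\<Sum>t<n. \<Sum>l = 0..<M. f t l)"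
  proof (rule sum.cong[OF refl])
    fix t
    have "(\<Sum>k = t * M..<t * M + M. f (k div M) (k mod M))
        = (\<Sum>l = 0..<M. f ((l + t * M) div M) ((l + t * M) mod M))"
      using sum.shift_bounds_nat_ivl[of "\<lambda>k. f (k div M) (k mod M)" 0 "t * M" M]
      by (simp add: add.commute)
    also have "\<dots> = (\<Sum>l = 0..<M. f t l)"
      using assms by (intro sum.cong) auto
    finally show "(\<Sum>k = t * M..<t * M + M. f (k div M) (k mod M)) = (\<Sum>l = 0..<M. f t l)" .
  qed
  finally show ?thesis .
qed

lemma block_mat3_mult:
  fixes F G :: "nat \<Rightarrow> nat \<Rightarrow> 'a :: comm_semiring_1 mat"
  assumes F: "\<And>r s. F r s \<in> carrier_mat M M" and G: "\<And>r s. G r s \<in> carrier_mat M M"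
  shows "block_mat3 M F * block_mat3 M G
    = block_mat3 M (\<lambda>r s. F r 0 * G 0 s + F r 1 * G 1 s + F r 2 * G 2 s)"
proof (rule eq_matI)
  fix i j assume "i < dim_row (block_mat3 M (\<lambda>r s. F r 0 * G 0 s + F r 1 * G 1 s + F r 2 * G 2 s))"
    "j < dim_col (block_mat3 M (\<lambda>r s. F r 0 * G 0 s + F r 1 * G 1 s + F r 2 * G 2 s))"
  then have ij: "i < 3 * M" "j < 3 * M" by auto
  then have M: "M > 0" by auto
  have dims: "dim_row (F r s) = M" "dim_col (F r s) = M" "dim_row (G r s) = M" "dim_col (G r s) = M"
    for r s using F[of r s] G[of r s] by auto
  have "(block_mat3 M F * block_mat3 M G) $$ (i,j) = (\<Sum>k = 0..<3 * M.
      F (i div M) (k div M) $$ (i mod M, k mod M) * G (k div M) (j div M) $$ (k mod M, j mod M))"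
    using ij by (simp add: block_mat3_def block_grid_def scalar_prod_def)
  also have "\<dots> = (\<Sum>t<3. \<Sum>l = 0..<M. F (i div M) t $$ (i mod M, l) * G t (j div M) $$ (l, j mod M))"
    by (rule sum_div_mod_blocks[OF M])
  also have "\<dots> = block_mat3 M (\<lambda>r s. F r 0 * G 0 s + F r 1 * G 1 s + F r 2 * G 2 s) $$ (i,j)"
    using ij M dims
    by (simp add: block_mat3_def block_grid_def scalar_prod_def numeral_3_eq_3 lessThan_Suc
        numeral_2_eq_2 ac_simps)
  finally show "(block_mat3 M F * block_mat3 M G) $$ (i,j)
    = block_mat3 M (\<lambda>r s. F r 0 * G 0 s + F r 1 * G 1 s + F r 2 * G 2 s) $$ (i,j)" .
qed auto

lemma block_diag3_one: "block_diag3 M (1\<^sub>m M) = (1\<^sub>m (3 * M) :: 'a :: {zero,one} mat)"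
proof (rule eq_matI)
  fix i j assume "i < dim_row (1\<^sub>m (3 * M) :: 'a mat)" "j < dim_col (1\<^sub>m (3 * M) :: 'a mat)"
  moreover have "(i div M = j div M \<and> i mod M = j mod M) = (i = j)"
    by (metis div_mult_mod_eq)
  ultimately show "block_diag3 M (1\<^sub>m M) $$ (i, j) = (1\<^sub>m (3 * M) :: 'a mat) $$ (i, j)"
    by (auto simp: block_diag3_def block_mat3_def block_grid_def)
qed (auto simp: block_diag3_def)

lemma block_diag3_conj:
  fixes F :: "nat \<Rightarrow> nat \<Rightarrow> 'a :: comm_semiring_1 mat"
  assumes P: "P \<in> carrier_mat M M" and Q: "Q \<in> carrier_mat M M"
    and F: "\<And>r s. F r s \<in> carrier_mat M M"
  shows "block_diag3 M P * block_mat3 M F * block_diag3 M Q = block_mat3 M (\<lambda>r s. P * F r s * Q)"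
proof -
  have three: "r < 3 \<Longrightarrow> r = 0 \<or> r = 1 \<or> r = 2" for r :: nat by auto
  have dims: "dim_row (F r s) = M" "dim_col (F r s) = M"
    and PF: "P * F r s \<in> carrier_mat M M" "P * F r s * Q \<in> carrier_mat M M" for r s
    using P Q F[of r s] by auto
  have "block_diag3 M P * block_mat3 M F = block_mat3 M (\<lambda>r s. P * F r s)"
    unfolding block_diag3_def using P F
    by (subst block_mat3_mult) (auto intro!: block_mat3_cong dest!: three simp: dims PF)
  moreover have "block_mat3 M (\<lambda>r s. P * F r s) * block_diag3 M Q = block_mat3 M (\<lambda>r s. P * F r s * Q)"
    unfolding block_diag3_def using P Q F
    by (subst block_mat3_mult) (auto intro!: block_mat3_cong dest!: three simp: dims PF)
  ultimately show ?thesis by simp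
qed

section \<open>The characteristic polynomial of Q\<close>

lemma Q_mat_eq_block_mat3: "Q_mat kn kp ku M A = block_mat3 M (Q_block kn kp ku M A)"
  by (simp add: Q_mat_def block_mat3_def block_grid_def)

lemma Q_mat_carrier: "Q_mat kn kp ku M A \<in> carrier_mat (3 * M) (3 * M)"
  by (simp add: Q_mat_def)

lemma Q_block_carrier: "A \<in> carrier_mat M M \<Longrightarrow> Q_block kn kp ku M A r s \<in> carrier_mat M M"
  unfolding Q_block_def by auto

lemma Q_block_conj:
  assumes A: "A \<in> carrier_mat M M" and P: "P \<in> carrier_mat M M" and Q: "Q \<in> carrier_mat M M"
    and PQ: "P * Q = 1\<^sub>m M"
  shows "P * Q_block kn kp ku M A r s * Q = Q_block kn kp ku M (P * A * Q) r s"
proof -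
  have smult: "P * (c \<cdot>\<^sub>m X) * Q = c \<cdot>\<^sub>m (P * X * Q)" if "X \<in> carrier_mat M M" for c X
  proof -
    have "P * (c \<cdot>\<^sub>m X) = c \<cdot>\<^sub>m (P * X)" using P that by (rule mult_smult_distrib)
    then show ?thesis using P Q that mult_smult_assoc_mat[of "P * X" M M Q M c] by simp
  qed
  show ?thesis
    using smult[OF A] smult[OF one_carrier_mat] P Q PQ by (simp add: Q_block_def)
qed

lemma similar_Q_mat:
  assumes A: "A \<in> carrier_mat M M" and "similar_mat A T"
  shows "similar_mat (Q_mat kn kp ku M A) (Q_mat kn kp ku M T)"
proof -
  obtain n P Q where carr: "{A, T, P, Q} \<subseteq> carrier_mat n n"
    and PQ: "P * Q = 1\<^sub>m n" and QP: "Q * P = 1\<^sub>m n" and AT: "A = P * T * Q"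
    using similar_matD[OF \<open>similar_mat A T\<close>] by blast
  from carr A have "n = M" by auto
  with carr PQ QP have T: "T \<in> carrier_mat M M" and P: "P \<in> carrier_mat M M"
    and Q: "Q \<in> carrier_mat M M" and PQ: "P * Q = 1\<^sub>m M" and QP: "Q * P = 1\<^sub>m M"
    by auto
  have diag_inverse: "block_diag3 M X * block_diag3 M Y = 1\<^sub>m (3 * M)"
    if X: "X \<in> carrier_mat M M" and Y: "Y \<in> carrier_mat M M" and XY: "X * Y = 1\<^sub>m M" for X Y :: "real mat"
  proof -
    have "block_diag3 M X * block_diag3 M Y = block_diag3 M X * block_diag3 M (1\<^sub>m M) * block_diag3 M Y"
      using right_mult_one_mat[of "block_diag3 M X" "3 * M" "3 * M"] by (simp add: block_diag3_one)
    also have "\<dots> = block_diag3 M (X * Y)"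
      unfolding block_diag3_def[of M "1\<^sub>m M"] using X Y
      by (subst block_diag3_conj) (auto simp: block_diag3_def intro!: block_mat3_cong)
    finally show ?thesis using XY by (simp add: block_diag3_one)
  qed
  show ?thesis
  proof (rule similar_matI)
    show "{Q_mat kn kp ku M A, Q_mat kn kp ku M T, block_diag3 M P, block_diag3 M Q}
        \<subseteq> carrier_mat (3 * M) (3 * M)"
      by (simp add: Q_mat_eq_block_mat3 block_diag3_def)
    show "block_diag3 M P * block_diag3 M Q = 1\<^sub>m (3 * M)" "block_diag3 M Q * block_diag3 M P = 1\<^sub>m (3 * M)"
      using diag_inverse P Q PQ QP by auto
    show "Q_mat kn kp ku M A = block_diag3 M P * Q_mat kn kp ku M T * block_diag3 M Q"
      unfolding Q_mat_eq_block_mat3 AT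
      by (simp only: block_diag3_conj[OF P Q Q_block_carrier[OF T]] Q_block_conj[OF T P Q PQ])
  qed
qed

lemma Q_block_diag_entry:
  assumes "A \<in> carrier_mat M M" and "l < M"
  shows "Q_block kn kp ku M A r s $$ (l,l) = Q_block kn kp ku 1 (mat 1 1 (\<lambda>_. A $$ (l,l))) r s $$ (0,0)"
  using assms by (simp add: Q_block_def)

lemma char_poly_Q_mat_upper_triangular:
  assumes T: "T \<in> carrier_mat M M" and "upper_triangular T"
  shows "char_poly (Q_mat kn kp ku M T)
    = (\<Prod>l<M. char_poly (Q_mat kn kp ku 1 (mat 1 1 (\<lambda>_. T $$ (l,l)))))"
proof -
  define h where "h r s a b = (if r = s \<and> a = b then [:0,1:] else 0) + [:- Q_block kn kp ku M T r s $$ (a,b):]"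
    for r s a b
  have same_index: "(i div M = j div M \<and> i mod M = j mod M) = (i = j)" for i j
    by (metis div_mult_mod_eq)
  have "char_poly_matrix (Q_mat kn kp ku M T) $$ (i,j) = h (i div M) (j div M) (i mod M) (j mod M)"
    if "i < 3 * M" "j < 3 * M" for i j
    using that by (simp add: char_poly_matrix_def Q_mat_def h_def same_index[of i j, symmetric])
  then have "char_poly_matrix (Q_mat kn kp ku M T) = block_grid M 3 h"
    using carrier_matD[OF char_poly_matrix_closed[OF Q_mat_carrier]]
    by (intro eq_matI) (auto simp: block_grid_def)
  then have "char_poly (Q_mat kn kp ku M T) = det (block_grid 3 M (\<lambda>a b r s. h r s a b))"
    using det_block_grid_swap[of M 3 h] by (simp add: char_poly_def)
  also have "\<dots> = (\<Prod>l<M. det (mat 3 3 (\<lambda>(r,s). h r s l l)))"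
  proof (rule det_block_grid_upper_triangular)
    fix a b r s assume "b < a" "a < M"
    moreover have "T $$ (a,b) = 0"
      using T \<open>b < a\<close> \<open>a < M\<close> by (intro upper_triangularD[OF \<open>upper_triangular T\<close>]) auto
    ultimately show "h r s a b = 0"
      using T by (simp add: h_def Q_block_def)
  qed
  also have "\<dots> = (\<Prod>l<M. char_poly (Q_mat kn kp ku 1 (mat 1 1 (\<lambda>_. T $$ (l,l)))))"
  proof (rule prod.cong[OF refl])
    fix l assume "l \<in> {..<M}"
    then have "mat 3 3 (\<lambda>(r,s). h r s l l) = char_poly_matrix (Q_mat kn kp ku 1 (mat 1 1 (\<lambda>_. T $$ (l,l))))"
      using Q_block_diag_entry[OF T, of l] by (intro eq_matI) (auto simp: h_def char_poly_matrix_def Q_mat_def)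
    then show "det (mat 3 3 (\<lambda>(r,s). h r s l l)) = char_poly (Q_mat kn kp ku 1 (mat 1 1 (\<lambda>_. T $$ (l,l))))"
      by (simp add: char_poly_def)
  qed
  finally show ?thesis .
qed

lemma mu2_mu3_factor:
  assumes "kn \<noteq> 0"
  shows "[:- mu kn kp ku 2 t, 1:] * [:- mu kn kp ku 3 t, 1:]
    = [:- (kp / kn * t), 1:] * [:- (ku * t), 1:] - [:(ku / (2 * kn) * t)\<^sup>2 + (1 / (2 * kn))\<^sup>2:]"
proof -
  define s where "s = sqrt (1 + t\<^sup>2 * k2 kn kp ku)"
  have s2: "s * s = 1 + t\<^sup>2 * k2 kn kp ku"
    unfolding s_def by (simp add: k2_def)
  have "mu kn kp ku 2 t * mu kn kp ku 3 t = ((t * k1 kn kp ku)\<^sup>2 - s * s) / (4 * kn\<^sup>2)"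
    using assms by (simp add: mu_def s_def field_simps power2_eq_square)
  also have "\<dots> = (kp / kn * t) * (ku * t) - (ku / (2 * kn) * t)\<^sup>2 - (1 / (2 * kn))\<^sup>2"
    unfolding s2 k1_def k2_def using assms by (simp add: field_simps power2_eq_square)
  finally have "mu kn kp ku 2 t * mu kn kp ku 3 t
      = (kp / kn * t) * (ku * t) - (ku / (2 * kn) * t)\<^sup>2 - (1 / (2 * kn))\<^sup>2" .
  moreover have "mu kn kp ku 2 t + mu kn kp ku 3 t = kp / kn * t + ku * t"
    using assms by (simp add: mu_def k1_def field_simps)
  ultimately show ?thesis
    by (simp add: algebra_simps)
qed

lemma char_poly_Q_mat_scalar:
  assumes "kn \<noteq> 0"
  shows "char_poly (Q_mat kn kp ku 1 (mat 1 1 (\<lambda>_. t))) = (\<Prod>j = 1..3. [:- mu kn kp ku j t, 1:])"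
proof -
  let ?C = "char_poly_matrix (Q_mat kn kp ku 1 (mat 1 1 (\<lambda>_. t)))"
  have "?C = mat 3 3 (\<lambda>(r,s). ?C $$ (r,s))"
    using carrier_matD[OF char_poly_matrix_closed[OF Q_mat_carrier]] by (intro eq_matI) auto
  then have "char_poly (Q_mat kn kp ku 1 (mat 1 1 (\<lambda>_. t))) = det (mat 3 3 (\<lambda>(r,s). ?C $$ (r,s)))"
    unfolding char_poly_def by (rule arg_cong)
  also have "\<dots> = [:- (kp / kn * t), 1:] * ([:- (kp / kn * t), 1:] * [:- (ku * t), 1:]
          - [:(ku / (2 * kn) * t)\<^sup>2 + (1 / (2 * kn))\<^sup>2:])"
    unfolding det_mat3 by (simp add: char_poly_matrix_def Q_mat_def Q_block_def
        numeral_eq_Suc algebra_simps power2_eq_square)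
  also have "\<dots> = [:- mu kn kp ku 1 t, 1:] * ([:- mu kn kp ku 2 t, 1:] * [:- mu kn kp ku 3 t, 1:])"
  proof -
    have "mu kn kp ku 1 t = kp / kn * t" by (simp add: mu_def)
    then show ?thesis unfolding mu2_mu3_factor[OF assms] by simp
  qed
  also have "\<dots> = (\<Prod>j = 1..3. [:- mu kn kp ku j t, 1:])"
    by (simp add: numeral_eq_Suc atLeastAtMostSuc_conv algebra_simps)
  finally show ?thesis .
qed

lemma schur_triangularization:
  fixes A :: "'a :: conjugatable_ordered_field mat"
  assumes A: "A \<in> carrier_mat n n" and cp: "char_poly A = (\<Prod>i = 1..n. [:- lam i, 1:])"
  obtains T where "T \<in> carrier_mat n n" "upper_triangular T" "similar_mat A T"
    "\<And>l. l < n \<Longrightarrow> T $$ (l,l) = lam (Suc l)"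
proof -
  define es where "es = map lam [1..<Suc n]"
  have "(\<Prod>e \<leftarrow> es. [:- e, 1:]) = (\<Prod>i \<leftarrow> [1..<Suc n]. [:- lam i, 1:])"
    by (simp add: es_def o_def)
  also have "\<dots> = (\<Prod>i \<in> set [1..<Suc n]. [:- lam i, 1:])"
    by (rule prod.distinct_set_conv_list[symmetric]) simp
  also have "set [1..<Suc n] = {1..n}" by auto
  finally have "char_poly A = (\<Prod>e \<leftarrow> es. [:- e, 1:])" using cp by simp
  moreover obtain T P Q where sch: "schur_decomposition A es = (T, P, Q)"
    by (cases "schur_decomposition A es") auto
  ultimately have wit: "similar_mat_wit A T P Q" and "upper_triangular T" and diag: "diag_mat T = es"
    using schur_decomposition[OF A] by blast+
  moreover have T: "T \<in> carrier_mat n n"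
    using similar_mat_witD2[OF A wit] by auto
  moreover have "similar_mat A T"
    using wit by (auto simp: similar_mat_def)
  moreover have "T $$ (l,l) = lam (Suc l)" if "l < n" for l
    using arg_cong[OF diag, of "\<lambda>xs. xs ! l"] T that
    by (simp add: diag_mat_def es_def del: upt_Suc)
  ultimately show ?thesis using that by blast
qed

lemma char_poly_Q_mat:
  assumes A: "A \<in> carrier_mat M M" and cp: "char_poly A = (\<Prod>i = 1..M. [:- lam i, 1:])"
  shows "char_poly (Q_mat kn kp ku M A) = (\<Prod>i = 1..M. char_poly (Q_mat kn kp ku 1 (mat 1 1 (\<lambda>_. lam i))))"
proof -
  obtain T where T: "T \<in> carrier_mat M M" "upper_triangular T" "similar_mat A T"
    and diag: "\<And>l. l < M \<Longrightarrow> T $$ (l,l) = lam (Suc l)"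
    using schur_triangularization[OF A cp] by blast
  have "char_poly (Q_mat kn kp ku M A) = char_poly (Q_mat kn kp ku M T)"
    by (rule char_poly_similar[OF similar_Q_mat[OF A T(3)]])
  also have "\<dots> = (\<Prod>l<M. char_poly (Q_mat kn kp ku 1 (mat 1 1 (\<lambda>_. lam (Suc l)))))"
    using diag by (simp add: char_poly_Q_mat_upper_triangular[OF T(1,2)])
  also have "\<dots> = (\<Prod>i = 1..M. char_poly (Q_mat kn kp ku 1 (mat 1 1 (\<lambda>_. lam i))))"
    by (simp add: prod.atLeast1_atMost_eq)
  finally show ?thesis .
qed

section \<open>Location of the eigenvalues\<close>

lemma abs_mult_sqrt_le_sqrt_one_plus: "\<bar>x\<bar> * sqrt c \<le> sqrt (1 + x\<^sup>2 * c)"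
proof -
  have "\<bar>x\<bar> * sqrt c = sqrt (x\<^sup>2 * c)" by (simp add: real_sqrt_mult)
  also have "\<dots> \<le> sqrt (1 + x\<^sup>2 * c)" by simp
  finally show ?thesis .
qed

text \<open>sqrt (1 + z^2 c) is the norm of (1, z sqrt c), so this is the reverse triangle inequality.\<close>

lemma sqrt_one_plus_sq_lipschitz:
  fixes x y c :: real
  assumes "c \<ge> 0"
  shows "\<bar>sqrt (1 + y\<^sup>2 * c) - sqrt (1 + x\<^sup>2 * c)\<bar> \<le> \<bar>y - x\<bar> * sqrt c"
proof -
  have norm: "sqrt (1 + z\<^sup>2 * c) = cmod (Complex 1 (z * sqrt c))" for z
    using assms by (simp add: cmod_def power_mult_distrib)
  have "\<bar>cmod (Complex 1 (y * sqrt c)) - cmod (Complex 1 (x * sqrt c))\<bar>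
      \<le> cmod (Complex 1 (y * sqrt c) - Complex 1 (x * sqrt c))"
    by (rule norm_triangle_ineq3)
  also have "\<dots> = \<bar>y - x\<bar> * sqrt c"
    using assms by (simp add: cmod_def left_diff_distrib[symmetric] abs_mult)
  finally show ?thesis unfolding norm .
qed

lemma k1_sq_minus_k2: "(k1 kn kp ku)\<^sup>2 - k2 kn kp ku = 4 * kn * kp * ku - ku\<^sup>2"
  unfolding k1_def k2_def by (simp add: algebra_simps power2_eq_square)

lemma mu_le_mu3:
  assumes "kn > 0" and "j \<in> {1..3}"
  shows "mu kn kp ku j x \<le> mu kn kp ku 3 x"
proof -
  have k2: "k2 kn kp ku \<ge> 0" by (simp add: k2_def)
  have "x * (kp - kn * ku) \<le> \<bar>x\<bar> * \<bar>kp - kn * ku\<bar>"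
    by (metis abs_ge_self abs_mult)
  also have "\<dots> \<le> \<bar>x\<bar> * sqrt (k2 kn kp ku)"
    by (intro mult_left_mono real_le_rsqrt) (simp_all add: k2_def)
  also have "\<dots> \<le> sqrt (1 + x\<^sup>2 * k2 kn kp ku)"
    by (rule abs_mult_sqrt_le_sqrt_one_plus)
  finally have "2 * kn * (kp / kn * x) \<le> x * k1 kn kp ku + sqrt (1 + x\<^sup>2 * k2 kn kp ku)"
    using assms(1) by (simp add: k1_def algebra_simps)
  then have "mu kn kp ku 1 x \<le> mu kn kp ku 3 x"
    using assms(1) by (simp add: mu_def field_simps)
  moreover have "mu kn kp ku 2 x \<le> mu kn kp ku 3 x"
    using assms(1) k2 by (simp add: mu_def divide_right_mono)
  moreover have "j = 1 \<or> j = 2 \<or> j = 3"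
    using assms(2) by auto
  ultimately show ?thesis by auto
qed

lemma mu3_mono:
  assumes kn: "kn > 0" and kp: "kp > 0" and ku: "ku > 0" and gap: "ku\<^sup>2 \<le> 4 * kn * kp * ku"
    and "y \<le> x"
  shows "mu kn kp ku 3 y \<le> mu kn kp ku 3 x"
proof -
  have k1: "k1 kn kp ku \<ge> 0" using kn kp ku by (simp add: k1_def)
  have k2: "k2 kn kp ku \<le> (k1 kn kp ku)\<^sup>2" using gap k1_sq_minus_k2[of kn kp ku] by linarith
  have k2_nonneg: "k2 kn kp ku \<ge> 0" by (simp add: k2_def)
  have "sqrt (1 + y\<^sup>2 * k2 kn kp ku) - sqrt (1 + x\<^sup>2 * k2 kn kp ku) \<le> (x - y) * sqrt (k2 kn kp ku)"
    using sqrt_one_plus_sq_lipschitz[OF k2_nonneg, of y x] \<open>y \<le> x\<close> by simp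
  also have "\<dots> \<le> (x - y) * k1 kn kp ku"
    using \<open>y \<le> x\<close> k1 k2 by (intro mult_left_mono real_le_lsqrt) auto
  finally show ?thesis
    using kn by (simp add: mu_def divide_right_mono algebra_simps)
qed

lemma mu3_neg:
  assumes kn: "kn > 0" and kp: "kp > 0" and ku: "ku > 0" and x: "x < 0"
    and stable: "x\<^sup>2 * (4 * kn * kp * ku - ku\<^sup>2) > 1"
  shows "mu kn kp ku 3 x < 0"
proof -
  have k1: "k1 kn kp ku > 0" unfolding k1_def using kn kp ku by (simp add: add_pos_pos)
  have "x\<^sup>2 * (k1 kn kp ku)\<^sup>2 - x\<^sup>2 * k2 kn kp ku = x\<^sup>2 * (4 * kn * kp * ku - ku\<^sup>2)"
    using k1_sq_minus_k2[of kn kp ku] by (metis right_diff_distrib)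
  then have "1 + x\<^sup>2 * k2 kn kp ku < (x * k1 kn kp ku)\<^sup>2"
    using stable unfolding power_mult_distrib by linarith
  then have "sqrt (1 + x\<^sup>2 * k2 kn kp ku) < \<bar>x * k1 kn kp ku\<bar>"
    using real_sqrt_less_mono by fastforce
  also have "\<dots> = - (x * k1 kn kp ku)"
    using abs_of_neg[OF mult_neg_pos[OF x k1]] .
  finally have "x * k1 kn kp ku + sqrt (1 + x\<^sup>2 * k2 kn kp ku) < 0" by simp
  then show ?thesis
    using kn by (simp add: mu_def divide_neg_pos)
qed

lemma le_last_if_sorted:
  fixes f :: "nat \<Rightarrow> 'a :: order"
  assumes sorted: "\<forall>i \<in> {1..<M}. f i \<le> f (Suc i)" and "1 \<le> i" "i \<le> M"
  shows "f i \<le> f M"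
  using \<open>i \<le> M\<close> \<open>1 \<le> i\<close>
proof (induction rule: inc_induct)
  case (step n)
  then have "f n \<le> f (Suc n)" using sorted by simp
  with step show ?case by simp
qed simp

theorem lemma1:
  fixes A :: "real mat" and M :: nat and lam :: "nat \<Rightarrow> real" and kn kp ku :: real
  assumes "A \<in> carrier_mat M M"
    and "transpose_mat A = A"
    and "char_poly A = (\<Prod>i = 1..M. [:- lam i, 1:])"
    and "kn > 0" and "kp > 0" and "ku > 0"
  shows "char_poly (Q_mat kn kp ku M A) =
           (\<Prod>i = 1..M. \<Prod>j = 1..3. [:- mu kn kp ku j (lam i), 1:])
         \<and> k1 kn kp ku > 0 \<and> k2 kn kp ku > 0
         \<and> ((M \<ge> 1 \<and> (\<forall>i \<in> {1..<M}. lam i \<le> lam (Suc i)) \<and> lam M < 0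
              \<and> (lam M)\<^sup>2 * (4 * kn * kp * ku - ku\<^sup>2) > 1)
            \<longrightarrow> (\<forall>j \<in> {1..3}. \<forall>i \<in> {1..M}. mu kn kp ku j (lam i) < 0)
                \<and> mu kn kp ku 3 (lam M) =
                    Max {mu kn kp ku j (lam i) | j i. j \<in> {1..3} \<and> i \<in> {1..M}})"
proof (intro conjI impI)
  note kn = \<open>kn > 0\<close> and kp = \<open>kp > 0\<close> and ku = \<open>ku > 0\<close>
  show "char_poly (Q_mat kn kp ku M A) = (\<Prod>i = 1..M. \<Prod>j = 1..3. [:- mu kn kp ku j (lam i), 1:])"
    using char_poly_Q_mat_scalar[of kn kp ku] kn by (simp only: char_poly_Q_mat[OF assms(1,3)])
  show "k1 kn kp ku > 0" using kn kp ku by (simp add: k1_def add_pos_pos)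
  show "k2 kn kp ku > 0" using ku by (simp add: k2_def add_pos_nonneg)
  assume "M \<ge> 1 \<and> (\<forall>i \<in> {1..<M}. lam i \<le> lam (Suc i)) \<and> lam M < 0
    \<and> (lam M)\<^sup>2 * (4 * kn * kp * ku - ku\<^sup>2) > 1"
  then have "M \<ge> 1" and sorted: "\<forall>i \<in> {1..<M}. lam i \<le> lam (Suc i)" and "lam M < 0"
    and stable: "(lam M)\<^sup>2 * (4 * kn * kp * ku - ku\<^sup>2) > 1" by auto
  have "0 < (lam M)\<^sup>2 * (4 * kn * kp * ku - ku\<^sup>2)" using stable by linarith
  moreover have "0 < (lam M)\<^sup>2" using \<open>lam M < 0\<close> by simp
  ultimately have gap: "ku\<^sup>2 \<le> 4 * kn * kp * ku" using zero_less_mult_pos by fastforce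
  have below_top: "mu kn kp ku j (lam i) \<le> mu kn kp ku 3 (lam M)" if "j \<in> {1..3}" "i \<in> {1..M}" for j i
    using mu_le_mu3[OF kn \<open>j \<in> {1..3}\<close>] mu3_mono[OF kn kp ku gap le_last_if_sorted[OF sorted]] that
    by (meson atLeastAtMost_iff order_trans)
  have top_neg: "mu kn kp ku 3 (lam M) < 0"
    by (rule mu3_neg[OF kn kp ku \<open>lam M < 0\<close> stable])
  show "\<forall>j \<in> {1..3}. \<forall>i \<in> {1..M}. mu kn kp ku j (lam i) < 0"
    using below_top top_neg by fastforce
  let ?S = "{mu kn kp ku j (lam i) | j i. j \<in> {1..3::nat} \<and> i \<in> {1..M}}"
  have "?S = (\<lambda>(j,i). mu kn kp ku j (lam i)) ` ({1..3} \<times> {1..M})" by (auto; blast)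
  then have "finite ?S" by simp
  moreover have "mu kn kp ku 3 (lam M) \<in> ?S"
    using \<open>M \<ge> 1\<close> by (intro CollectI exI[of _ 3] exI[of _ M]) auto
  ultimately show "mu kn kp ku 3 (lam M) = Max ?S"
    using below_top by (intro Max_eqI[symmetric]) auto
qed

end
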